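(* (Depth efficiency) Fix a leading degree $r\ge 2$. Let $\bm d_q=(d_0,\dots,d_{h_q})$ be a QRes architecture whose functional variety is filling, with leading functional variety $\mathcal{V}^2_{\bm d_q,r}$, and let $\bm d_n=(d_0',\dots,d_{h_n}')$ be a plain neural network architecture with leading functional variety $\mathcal{V}_{\bm d_n,r}$, where $h_n,h_q>1$, $d_0=d_0'$ and $d_{h_q}=d'_{h_n}$. If $\dim\mathcal{V}_{\bm d_n,r}\ge\dim\mathcal{V}^2_{\bm d_q,r}$, then $$h_n\ \ge\ 1+\Big(1+\frac{\log 2}{\log r}\Big)(h_q-1).$$
   Context: An architecture is a vector $\bm d=(d_0,\dots,d_h)$ of layer widths; $h$ is the depth, and layer $i$ maps $\mathbb{R}^{d_{i-1}}\to\mathbb{R}^{d_i}$. A plain neural-network layer is $x\mapsto\sigma(Wx+b)$; a QRes layer is $x\mapsto\sigma(W_2x\circ W_1x+W_1x+b)$, with trainable $W_1,W_2,b$, $\circ$ the Hadamard product, $\sigma$ applied entrywise. The functional space of an architecture is the image of the parameter-to-function map. Any activation is decomposed (e.g. by Taylor approximation) into polynomials; the highest degree $r$ appearing is its leading degree. The leading functional space is the subspace of the functional space consisting of homogeneous polynomials of highest degree; its Zariski closure is the leading functional variety, denoted $\mathcal{V}_{\bm d,r}$ (plain network, activation of leading degree $r$) or $\mathcal{V}^2_{\bm d,r}$ (QRes network). $\mathrm{Sym}_k(\mathbb{R}^n)$ denotes homogeneous degree-$k$ polynomials in $n$ real variables. A plain architecture $\bm d$ has a filling functional variety for degree $r$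 if $\mathcal{V}_{\bm d,r}=\mathrm{Sym}_{r^{h-1}}(\mathbb{R}^{d_0})^{d_h}$; a QRes architecture is filling for leading degree $r$ if its leading functional variety equals the full space of $d_h$-tuples of homogeneous polynomials of its leading degree, namely $\mathcal{V}^2_{\bm d,r}=\mathrm{Sym}_{(2r)^{h-1}}(\mathbb{R}^{d_0})^{d_h}$. *)

theory Defs
  imports Complex_Main
begin

text \<open>Vectors are functions nat \<Rightarrow> real; only the first d coordinates are meaningful.
  An architecture is a list of layer widths [d_0, ..., d_h]; its depth is h = length - 1.\<close>

type_synonym vec = "nat \<Rightarrow> real"

definition arch :: "nat list \<Rightarrow> bool" where
  "arch ds \<longleftrightarrow> length ds \<ge> 2 \<and> (\<forall>d\<in>set ds. d \<ge> 1)"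

definition depth :: "nat list \<Rightarrow> nat" where
  "depth ds = length ds - 1"

definition lin :: "nat \<Rightarrow> nat \<Rightarrow> (nat \<Rightarrow> nat \<Rightarrow> real) \<Rightarrow> vec \<Rightarrow> vec" where
  "lin dout din W x = (\<lambda>i. if i < dout then (\<Sum>j<din. W i j * x j) else 0)"

text \<open>Leading (top-degree homogeneous) part of a plain network with activation of
  leading degree r: x \<mapsto> W_h (W_{h-1} ( ... (W_1 x)^r ...)^r), last layer linear.
  Ws i is the weight matrix of layer i (i = 1..h).\<close>
fun plain_rec :: "nat list \<Rightarrow> nat \<Rightarrow> (nat \<Rightarrow> nat \<Rightarrow> nat \<Rightarrow> real) \<Rightarrow> nat \<Rightarrow> vec \<Rightarrow> vec" where
  "plain_rec ds r Ws 0 x = (\<lambda>j. if j < ds ! 0 then x j else 0)"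
| "plain_rec ds r Ws (Suc i) x =
     (let z = lin (ds ! Suc i) (ds ! i) (Ws (Suc i)) (plain_rec ds r Ws i x)
      in if Suc i < depth ds then (\<lambda>j. z j ^ r) else z)"

text \<open>Leading part of a QRes network: hidden layer y \<mapsto> ((W_2 y) \<circ> (W_1 y))^r (the leading part
  of \<sigma>(W_2 y \<circ> W_1 y + W_1 y + b)), last layer linear y \<mapsto> W_1 y, giving degree (2r)^(h-1).\<close>
fun qres_rec :: "nat list \<Rightarrow> nat \<Rightarrow> (nat \<Rightarrow> nat \<Rightarrow> nat \<Rightarrow> real) \<Rightarrow> (nat \<Rightarrow> nat \<Rightarrow> nat \<Rightarrow> real)
                 \<Rightarrow> nat \<Rightarrow> vec \<Rightarrow> vec" where
  "qres_rec ds r W1 W2 0 x = (\<lambda>j. if j < ds ! 0 then x j else 0)"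
| "qres_rec ds r W1 W2 (Suc i) x =
     (let y = qres_rec ds r W1 W2 i x;
          a = lin (ds ! Suc i) (ds ! i) (W1 (Suc i)) y;
          b = lin (ds ! Suc i) (ds ! i) (W2 (Suc i)) y
      in if Suc i < depth ds then (\<lambda>j. (b j * a j) ^ r) else a)"

definition plain_lead_space :: "nat list \<Rightarrow> nat \<Rightarrow> (vec \<Rightarrow> vec) set" where
  "plain_lead_space ds r = {plain_rec ds r Ws (depth ds) | Ws. True}"

definition qres_lead_space :: "nat list \<Rightarrow> nat \<Rightarrow> (vec \<Rightarrow> vec) set" where
  "qres_lead_space ds r = {qres_rec ds r W1 W2 (depth ds) | W1 W2. True}"

definition monoms :: "nat \<Rightarrow> nat \<Rightarrow> (nat \<Rightarrow> nat) set" where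
  "monoms n k = {\<alpha>. (\<forall>i\<ge>n. \<alpha> i = 0) \<and> (\<Sum>i<n. \<alpha> i) = k}"

definition hom_form :: "nat \<Rightarrow> nat \<Rightarrow> (vec \<Rightarrow> real) \<Rightarrow> bool" where
  "hom_form n k g \<longleftrightarrow> (\<exists>c. \<forall>x. g x = (\<Sum>\<alpha>\<in>monoms n k. c \<alpha> * (\<Prod>i<n. x i ^ \<alpha> i)))"

definition coeff :: "nat \<Rightarrow> nat \<Rightarrow> (vec \<Rightarrow> real) \<Rightarrow> (nat \<Rightarrow> nat) \<Rightarrow> real" where
  "coeff n k g = (THE c. (\<forall>\<alpha>. \<alpha> \<notin> monoms n k \<longrightarrow> c \<alpha> = 0) \<and>
                         (\<forall>x. g x = (\<Sum>\<alpha>\<in>monoms n k. c \<alpha> * (\<Prod>i<n. x i ^ \<alpha> i))))"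

text \<open>Coordinates of a D-tuple of degree-k forms in n variables: index (j, \<alpha>).\<close>
type_synonym cidx = "nat \<times> (nat \<Rightarrow> nat)"

definition cindex :: "nat \<Rightarrow> nat \<Rightarrow> nat \<Rightarrow> cidx set" where
  "cindex n k D = {..<D} \<times> monoms n k"

definition coords :: "nat \<Rightarrow> nat \<Rightarrow> nat \<Rightarrow> (vec \<Rightarrow> vec) \<Rightarrow> cidx \<Rightarrow> real" where
  "coords n k D F = (\<lambda>(j, \<alpha>). if j < D then coeff n k (\<lambda>x. F x j) \<alpha> else 0)"

definition sym_tuples :: "nat \<Rightarrow> nat \<Rightarrow> nat \<Rightarrow> (cidx \<Rightarrow> real) set" where
  "sym_tuples n k D = coords n k D ` {F. \<forall>j<D. hom_form n k (\<lambda>x. F x j)}"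

definition poly_on :: "'i set \<Rightarrow> (('i \<Rightarrow> real) \<Rightarrow> real) \<Rightarrow> bool" where
  "poly_on I p \<longleftrightarrow> (\<exists>M c. finite M \<and> (\<forall>m\<in>M. \<forall>i. i \<notin> I \<longrightarrow> m i = (0::nat)) \<and>
      (\<forall>y. p y = (\<Sum>m\<in>M. c m * (\<Prod>i\<in>I. y i ^ m i))))"

definition zclosed :: "'i set \<Rightarrow> ('i \<Rightarrow> real) set \<Rightarrow> bool" where
  "zclosed I V \<longleftrightarrow> (\<exists>P. (\<forall>p\<in>P. poly_on I p) \<and>
      V = {y. (\<forall>i. i \<notin> I \<longrightarrow> y i = 0) \<and> (\<forall>p\<in>P. p y = 0)})"

definition zclosure :: "'i set \<Rightarrow> ('i \<Rightarrow> real) set \<Rightarrow> ('i \<Rightarrow> real) set" where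
  "zclosure I S = \<Inter> {V. zclosed I V \<and> S \<subseteq> V}"

definition zirreducible :: "'i set \<Rightarrow> ('i \<Rightarrow> real) set \<Rightarrow> bool" where
  "zirreducible I V \<longleftrightarrow> zclosed I V \<and> V \<noteq> {} \<and>
     (\<forall>A B. zclosed I A \<longrightarrow> zclosed I B \<longrightarrow> V \<subseteq> A \<union> B \<longrightarrow> V \<subseteq> A \<or> V \<subseteq> B)"

definition zdim :: "'i set \<Rightarrow> ('i \<Rightarrow> real) set \<Rightarrow> nat" where
  "zdim I V = Sup {n. \<exists>Z. (\<forall>k\<le>n. zirreducible I (Z k) \<and> Z k \<subseteq> V) \<and> (\<forall>k<n. Z k \<subset> Z (Suc k))}"

definition plain_index :: "nat list \<Rightarrow> nat \<Rightarrow> cidx set" where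
  "plain_index ds r = cindex (ds ! 0) (r ^ (depth ds - 1)) (last ds)"

definition qres_index :: "nat list \<Rightarrow> nat \<Rightarrow> cidx set" where
  "qres_index ds r = cindex (ds ! 0) ((2 * r) ^ (depth ds - 1)) (last ds)"

definition plain_variety :: "nat list \<Rightarrow> nat \<Rightarrow> (cidx \<Rightarrow> real) set" where
  "plain_variety ds r = zclosure (plain_index ds r)
     (coords (ds ! 0) (r ^ (depth ds - 1)) (last ds) ` plain_lead_space ds r)"

definition qres_variety :: "nat list \<Rightarrow> nat \<Rightarrow> (cidx \<Rightarrow> real) set" where
  "qres_variety ds r = zclosure (qres_index ds r)
     (coords (ds ! 0) ((2 * r) ^ (depth ds - 1)) (last ds) ` qres_lead_space ds r)"

definition qres_filling :: "nat list \<Rightarrow> nat \<Rightarrow> bool" where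
  "qres_filling ds r \<longleftrightarrow>
     qres_variety ds r = sym_tuples (ds ! 0) ((2 * r) ^ (depth ds - 1)) (last ds)"

end

theory Submission
  imports Defs "HOL-Computational_Algebra.Polynomial" "HOL-Library.FuncSet"
begin

text \<open>Both leading varieties live in the coordinate space of D-tuples of degree-k forms in
  d_0 variables, whose dimension N is D times the number of degree-k monomials.
  The Krull dimension of any subset is at most N: along a strict chain Z_0 \<subset> ... \<subset> Z_n of
  irreducible closed sets, polynomials separating consecutive members (of degree \<le> E in each
  variable) produce (t + n choose n) polynomials of degree \<le> t E in each variable that are
  linearly independent on Z_n, whereas there are only (t E + 1)^N such monomials; so n \<le> N.
  Conversely, the coordinate subspaces form a chain of length N, so a filling QRes variety has
  dimension exactly N.  The dimension hypothesis therefore bounds the number of monomials of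
  degree (2r)^(h_q-1) by that of degree r^(h_n-1); as d_0 \<ge> 2 this number strictly increases
  with the degree, so (2r)^(h_q-1) \<le> r^(h_n-1), and taking logarithms gives the bound.\<close>

section \<open>Polynomials of bounded degree in each variable\<close>

definition monomial_on :: "'i set \<Rightarrow> ('i \<Rightarrow> nat) \<Rightarrow> ('i \<Rightarrow> real) \<Rightarrow> real" where
  "monomial_on I m y = (\<Prod>i\<in>I. y i ^ m i)"

definition exps_le :: "'i set \<Rightarrow> nat \<Rightarrow> ('i \<Rightarrow> nat) set" where
  "exps_le I k = {m. (\<forall>i. i \<notin> I \<longrightarrow> m i = 0) \<and> (\<forall>i\<in>I. m i \<le> k)}"

definition poly_maxdeg :: "'i set \<Rightarrow> nat \<Rightarrow> (('i \<Rightarrow> real) \<Rightarrow> real) \<Rightarrow> bool" where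
  "poly_maxdeg I k f \<longleftrightarrow> (\<exists>c. \<forall>y. f y = (\<Sum>m\<in>exps_le I k. c m * monomial_on I m y))"

lemma inj_on_restrict_exps_le: "inj_on (\<lambda>m. restrict m I) (exps_le I k)"
proof (rule inj_onI)
  fix m m' assume m: "m \<in> exps_le I k" "m' \<in> exps_le I k" "restrict m I = restrict m' I"
  show "m = m'"
  proof
    fix i
    have "restrict m I i = restrict m' I i" using m(3) by simp
    then show "m i = m' i" using m(1,2) by (cases "i \<in> I") (auto simp: exps_le_def)
  qed
qed

lemma restrict_exps_le_subset: "(\<lambda>m. restrict m I) ` exps_le I k \<subseteq> PiE I (\<lambda>_. {..k})"
  by (auto simp: exps_le_def)

lemma finite_exps_le: "finite I \<Longrightarrow> finite (exps_le I k)"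
  using finite_subset[OF restrict_exps_le_subset finite_PiE]
  by (auto dest: finite_imageD[OF _ inj_on_restrict_exps_le])

lemma card_exps_le:
  assumes "finite I" shows "card (exps_le I k) \<le> (k + 1) ^ card I"
proof -
  have "card (exps_le I k) = card ((\<lambda>m. restrict m I) ` exps_le I k)"
    using inj_on_restrict_exps_le by (rule card_image[symmetric])
  also have "\<dots> \<le> card (PiE I (\<lambda>_. {..k}))"
    using assms restrict_exps_le_subset by (intro card_mono finite_PiE) auto
  also have "\<dots> = (k + 1) ^ card I"
    using assms by (simp add: card_PiE)
  finally show ?thesis .
qed

lemma poly_maxdeg_monomial_on:
  assumes "finite I" "m \<in> exps_le I k" shows "poly_maxdeg I k (monomial_on I m)"
  unfolding poly_maxdeg_def
proof (rule exI[of _ "\<lambda>m'. if m' = m then 1 else 0"], intro allI)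
  fix y
  have "(\<Sum>m'\<in>exps_le I k. (if m' = m then 1 else 0) * monomial_on I m' y)
      = (\<Sum>m'\<in>exps_le I k. if m' = m then monomial_on I m y else 0)"
    by (rule sum.cong) auto
  then show "monomial_on I m y = (\<Sum>m'\<in>exps_le I k. (if m' = m then 1 else 0) * monomial_on I m' y)"
    using assms by (simp add: sum.delta[OF finite_exps_le])
qed

lemma poly_maxdeg_add:
  "poly_maxdeg I k f \<Longrightarrow> poly_maxdeg I k g \<Longrightarrow> poly_maxdeg I k (\<lambda>y. f y + g y)"
proof -
  assume "poly_maxdeg I k f" "poly_maxdeg I k g"
  then obtain c d where "\<forall>y. f y = (\<Sum>m\<in>exps_le I k. c m * monomial_on I m y)"
    "\<forall>y. g y = (\<Sum>m\<in>exps_le I k. d m * monomial_on I m y)"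
    unfolding poly_maxdeg_def by blast
  then show ?thesis
    unfolding poly_maxdeg_def by (intro exI[of _ "\<lambda>m. c m + d m"]) (simp add: distrib_right sum.distrib)
qed

lemma poly_maxdeg_scale: "poly_maxdeg I k f \<Longrightarrow> poly_maxdeg I k (\<lambda>y. a * f y)"
proof -
  assume "poly_maxdeg I k f"
  then obtain c where "\<forall>y. f y = (\<Sum>m\<in>exps_le I k. c m * monomial_on I m y)"
    unfolding poly_maxdeg_def by blast
  then show ?thesis
    unfolding poly_maxdeg_def by (intro exI[of _ "\<lambda>m. a * c m"]) (simp add: sum_distrib_left mult.assoc)
qed

lemma poly_maxdeg_sum:
  "finite A \<Longrightarrow> (\<And>a. a \<in> A \<Longrightarrow> poly_maxdeg I k (F a)) \<Longrightarrow> poly_maxdeg I k (\<lambda>y. \<Sum>a\<in>A. F a y)"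
proof (induction A rule: finite_induct)
  case empty
  show ?case unfolding poly_maxdeg_def by (intro exI[of _ "\<lambda>_. 0"]) simp
next
  case (insert a A)
  then show ?case using poly_maxdeg_add[of I k "F a" "\<lambda>y. \<Sum>a\<in>A. F a y"] by simp
qed

lemma poly_maxdeg_mult:
  assumes I: "finite I" and f: "poly_maxdeg I e f" and g: "poly_maxdeg I k g"
  shows "poly_maxdeg I (e + k) (\<lambda>y. f y * g y)"
proof -
  obtain c where c: "\<And>y. f y = (\<Sum>m\<in>exps_le I e. c m * monomial_on I m y)"
    using f unfolding poly_maxdeg_def by blast
  obtain d where d: "\<And>y. g y = (\<Sum>m\<in>exps_le I k. d m * monomial_on I m y)"
    using g unfolding poly_maxdeg_def by blast
  have "f y * g y = (\<Sum>m\<in>exps_le I e. \<Sum>m'\<in>exps_le I k.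
          (c m * d m') * monomial_on I (\<lambda>i. m i + m' i) y)" for y
    by (simp add: c d sum_product monomial_on_def power_add prod.distrib mult_ac)
  moreover have "(\<lambda>i. m i + m' i) \<in> exps_le I (e + k)"
    if "m \<in> exps_le I e" "m' \<in> exps_le I k" for m m'
    using that by (auto simp: exps_le_def add_mono)
  ultimately show ?thesis
    by (simp only:) (intro poly_maxdeg_sum poly_maxdeg_scale poly_maxdeg_monomial_on finite_exps_le I)
qed

lemma poly_maxdeg_mono:
  assumes I: "finite I" and "e \<le> k" and f: "poly_maxdeg I e f" shows "poly_maxdeg I k f"
proof -
  obtain c where c: "f = (\<lambda>y. \<Sum>m\<in>exps_le I e. c m * monomial_on I m y)"
    using f unfolding poly_maxdeg_def by blast
  have "exps_le I e \<subseteq> exps_le I k"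
    using \<open>e \<le> k\<close> by (auto simp: exps_le_def)
  then show ?thesis
    unfolding c by (intro poly_maxdeg_sum poly_maxdeg_scale poly_maxdeg_monomial_on finite_exps_le I) auto
qed

lemma poly_maxdeg_1: "finite I \<Longrightarrow> poly_maxdeg I k (\<lambda>y. 1)"
  using poly_maxdeg_monomial_on[of I "\<lambda>_. 0" k]
  by (simp add: exps_le_def monomial_on_def[abs_def])

lemma poly_on_imp_poly_maxdeg:
  assumes I: "finite I" and p: "poly_on I p" shows "\<exists>k. poly_maxdeg I k p"
proof -
  obtain M c where M: "finite M" "\<forall>m\<in>M. \<forall>i. i \<notin> I \<longrightarrow> m i = 0"
    and p_eq: "p = (\<lambda>y. \<Sum>m\<in>M. c m * monomial_on I m y)"
    using p unfolding poly_on_def monomial_on_def by blast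
  define k where "k = (\<Sum>m\<in>M. \<Sum>i\<in>I. m i)"
  have "m i \<le> k" if "m \<in> M" "i \<in> I" for m i
  proof -
    have "m i \<le> (\<Sum>i\<in>I. m i)" using I that by (intro member_le_sum) auto
    also have "\<dots> \<le> k" unfolding k_def using M(1) that by (intro member_le_sum) auto
    finally show ?thesis .
  qed
  then have "M \<subseteq> exps_le I k" using M(2) by (auto simp: exps_le_def)
  then have "poly_maxdeg I k p"
    unfolding p_eq by (intro poly_maxdeg_sum poly_maxdeg_scale poly_maxdeg_monomial_on I M) auto
  then show ?thesis ..
qed

lemma poly_maxdeg_imp_poly_on:
  assumes "finite I" "poly_maxdeg I k f" shows "poly_on I f"
proof -
  obtain c where "\<forall>y. f y = (\<Sum>m\<in>exps_le I k. c m * monomial_on I m y)"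
    using assms(2) unfolding poly_maxdeg_def by blast
  moreover have "finite (exps_le I k)" using assms(1) by (rule finite_exps_le)
  ultimately show ?thesis
    unfolding poly_on_def monomial_on_def by (intro exI[of _ "exps_le I k"]) (auto simp: exps_le_def)
qed

lemma poly_maxdeg_on_line:
  assumes "poly_maxdeg I k f"
  shows "\<exists>P. \<forall>t. f (\<lambda>i. a i + t * (b i - a i)) = poly P t"
proof -
  obtain c where c: "\<And>y. f y = (\<Sum>m\<in>exps_le I k. c m * monomial_on I m y)"
    using assms unfolding poly_maxdeg_def by blast
  define P where "P = (\<Sum>m\<in>exps_le I k. smult (c m) (\<Prod>i\<in>I. [:a i, b i - a i:] ^ m i))"
  have "f (\<lambda>i. a i + t * (b i - a i)) = poly P t" for t
    unfolding P_def c by (simp add: poly_sum poly_prod monomial_on_def algebra_simps)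
  then show ?thesis by blast
qed

section \<open>An upper bound for the Krull dimension\<close>

lemma exists_linear_dependence:
  fixes L :: "'a \<Rightarrow> 'e \<Rightarrow> real"
  assumes "finite E" "finite A" "card E < card A"
  shows "\<exists>c. (\<exists>i\<in>A. c i \<noteq> 0) \<and> (\<forall>e\<in>E. (\<Sum>i\<in>A. c i * L i e) = 0)"
  using assms
proof (induction E arbitrary: A L rule: finite_induct)
  case empty
  then obtain i where "i \<in> A" by fastforce
  then show ?case by (intro exI[of _ "\<lambda>_. 1"]) auto
next
  case (insert e0 E)
  show ?case
  proof (cases "\<forall>i\<in>A. L i e0 = 0")
    case True
    then show ?thesis using insert.IH[of A L] insert.prems insert.hyps by auto
  next
    case False
    then obtain i0 where i0: "i0 \<in> A" "L i0 e0 \<noteq> 0" by blast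
    \<comment> \<open>Gaussian elimination: clear the e0-coordinate using the vector i0.\<close>
    define A' where "A' = A - {i0}"
    define L' where "L' = (\<lambda>i e. L i e - (L i e0 / L i0 e0) * L i0 e)"
    have A: "A = insert i0 A'" "i0 \<notin> A'" "finite A'"
      using i0 insert.prems unfolding A'_def by auto
    then have "card E < card A'" using insert.prems insert.hyps by simp
    then obtain c' where c': "\<exists>i\<in>A'. c' i \<noteq> 0" "\<forall>e\<in>E. (\<Sum>i\<in>A'. c' i * L' i e) = 0"
      using insert.IH[of A' L'] A(3) by blast
    define s where "s = (\<Sum>i\<in>A'. c' i * L i e0)"
    define c where "c = c'(i0 := - s / L i0 e0)"
    have sum_c: "(\<Sum>i\<in>A. c i * L i e) = (\<Sum>i\<in>A'. c' i * L i e) + c i0 * L i0 e" for e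
    proof -
      have "(\<Sum>i\<in>A'. c i * L i e) = (\<Sum>i\<in>A'. c' i * L i e)"
        using A(2) by (intro sum.cong) (auto simp: c_def)
      then show ?thesis using A by (simp add: add.commute)
    qed
    have "(\<Sum>i\<in>A. c i * L i e) = 0" if "e \<in> insert e0 E" for e
    proof (cases "e = e0")
      case True
      then show ?thesis using i0 by (simp only: sum_c) (simp add: c_def s_def)
    next
      case False
      then have "e \<in> E" using that by auto
      have "(\<Sum>i\<in>A'. c' i * L i e)
          = (\<Sum>i\<in>A'. c' i * L' i e) + (\<Sum>i\<in>A'. c' i * (L i e0 / L i0 e0) * L i0 e)"
        unfolding L'_def by (simp add: sum.distrib[symmetric] algebra_simps)
      also have "\<dots> = s / L i0 e0 * L i0 e"
        using c'(2) \<open>e \<in> E\<close> unfolding s_def by (simp add: sum_distrib_right sum_divide_distrib)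
      finally show ?thesis using i0 by (simp only: sum_c) (simp add: c_def)
    qed
    moreover have "\<exists>i\<in>A. c i \<noteq> 0" using c'(1) A unfolding c_def by auto
    ultimately show ?thesis by blast
  qed
qed

definition lin_indep_on :: "('i \<Rightarrow> real) set \<Rightarrow> nat \<Rightarrow> (nat \<Rightarrow> ('i \<Rightarrow> real) \<Rightarrow> real) \<Rightarrow> bool" where
  "lin_indep_on Z a g \<longleftrightarrow> (\<forall>c. (\<forall>y\<in>Z. (\<Sum>i<a. c i * g i y) = 0) \<longrightarrow> (\<forall>i<a. c i = 0))"

definition has_indep_polys :: "'i set \<Rightarrow> ('i \<Rightarrow> real) set \<Rightarrow> nat \<Rightarrow> nat \<Rightarrow> bool" where
  "has_indep_polys I Z k a \<longleftrightarrow> (\<exists>g. (\<forall>i<a. poly_maxdeg I k (g i)) \<and> lin_indep_on Z a g)"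

lemma has_indep_polys_le_card:
  assumes I: "finite I" and "has_indep_polys I Z k a" shows "a \<le> card (exps_le I k)"
proof (rule ccontr)
  assume "\<not> a \<le> card (exps_le I k)"
  then have lt: "card (exps_le I k) < card {..<a}" by simp
  obtain g where g: "\<forall>i<a. poly_maxdeg I k (g i)" "lin_indep_on Z a g"
    using assms(2) unfolding has_indep_polys_def by blast
  obtain C where C: "\<And>i y. i < a \<Longrightarrow> g i y = (\<Sum>m\<in>exps_le I k. C i m * monomial_on I m y)"
    using g(1) unfolding poly_maxdeg_def by metis
  obtain c where c: "\<exists>i\<in>{..<a}. c i \<noteq> 0" "\<forall>m\<in>exps_le I k. (\<Sum>i<a. c i * C i m) = 0"
    using exists_linear_dependence[OF finite_exps_le[OF I] _ lt, of C] by auto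
  have "(\<Sum>i<a. c i * g i y) = 0" for y
  proof -
    have "(\<Sum>i<a. c i * g i y) = (\<Sum>i<a. \<Sum>m\<in>exps_le I k. c i * C i m * monomial_on I m y)"
      using C by (simp add: sum_distrib_left mult.assoc)
    also have "\<dots> = (\<Sum>m\<in>exps_le I k. (\<Sum>i<a. c i * C i m) * monomial_on I m y)"
      by (subst sum.swap) (simp add: sum_distrib_right)
    also have "\<dots> = 0" using c(2) by simp
    finally show ?thesis .
  qed
  then show False using g(2) c(1) unfolding lin_indep_on_def by auto
qed

lemma has_indep_polys_1: "finite I \<Longrightarrow> Z \<noteq> {} \<Longrightarrow> has_indep_polys I Z k 1"
  unfolding has_indep_polys_def lin_indep_on_def
  by (intro exI[of _ "\<lambda>i y. 1"]) (auto simp: poly_maxdeg_1)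

lemma zclosed_imp_zero: "zclosed I Z \<Longrightarrow> y \<in> Z \<Longrightarrow> i \<notin> I \<Longrightarrow> y i = 0"
  unfolding zclosed_def by auto

lemma zclosed_separating_poly:
  assumes I: "finite I" and A: "zclosed I A" and y: "y \<notin> A" "\<forall>i. i \<notin> I \<longrightarrow> y i = 0"
  obtains k p where "poly_maxdeg I k p" "\<forall>x\<in>A. p x = 0" "p y \<noteq> 0"
proof -
  obtain P where P: "\<forall>p\<in>P. poly_on I p" "A = {x. (\<forall>i. i \<notin> I \<longrightarrow> x i = 0) \<and> (\<forall>p\<in>P. p x = 0)}"
    using A unfolding zclosed_def by blast
  then obtain p where "p \<in> P" "p y \<noteq> 0" using y by auto
  moreover obtain k where "poly_maxdeg I k p"
    using poly_on_imp_poly_maxdeg[OF I] P(1) \<open>p \<in> P\<close> by blast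
  ultimately show ?thesis using that P(2) by blast
qed

lemma zirreducible_mult_eq_0:
  fixes I :: "'i set"
  assumes I: "finite I" and Z: "zirreducible I Z"
    and f: "poly_maxdeg I e f" and g: "poly_maxdeg I k g" and fg: "\<forall>y\<in>Z. f y * g y = 0"
  shows "(\<forall>y\<in>Z. f y = 0) \<or> (\<forall>y\<in>Z. g y = 0)"
proof -
  define zeros where
    "zeros p = {y. (\<forall>i. i \<notin> I \<longrightarrow> y i = 0) \<and> (\<forall>q\<in>{p}. q y = (0::real))}"
    for p :: "('i \<Rightarrow> real) \<Rightarrow> real"
  have "zclosed I (zeros f)" "zclosed I (zeros g)"
    unfolding zeros_def zclosed_def using poly_maxdeg_imp_poly_on[OF I] f g by blast+
  moreover have "Z \<subseteq> zeros f \<union> zeros g"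
    using fg zclosed_imp_zero[of I Z] Z unfolding zirreducible_def zeros_def by auto
  ultimately have "Z \<subseteq> zeros f \<or> Z \<subseteq> zeros g" using Z unfolding zirreducible_def by blast
  then show ?thesis unfolding zeros_def by auto
qed

lemma has_indep_polys_extend:
  assumes I: "finite I" and Z': "zirreducible I Z'" and "Z \<subseteq> Z'"
    and f: "poly_maxdeg I e f" "\<forall>y\<in>Z. f y = 0" "\<exists>y\<in>Z'. f y \<noteq> 0"
    and "has_indep_polys I Z' k a" and "has_indep_polys I Z (e + k) b"
  shows "has_indep_polys I Z' (e + k) (b + a)"
proof -
  obtain g where g: "\<forall>i<a. poly_maxdeg I k (g i)" "lin_indep_on Z' a g"
    using assms(7) unfolding has_indep_polys_def by blast
  obtain p where p: "\<forall>i<b. poly_maxdeg I (e + k) (p i)" "lin_indep_on Z b p"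
    using assms(8) unfolding has_indep_polys_def by blast
  \<comment> \<open>The p i stay independent on Z, where the f * g i vanish; irreducibility of Z' cancels f.\<close>
  define h where "h i = (if i < b then p i else (\<lambda>y. f y * g (i - b) y))" for i
  have "poly_maxdeg I (e + k) (h i)" if "i < b + a" for i
    using that p(1) g(1) poly_maxdeg_mult[OF I f(1)] by (cases "i < b") (auto simp: h_def)
  moreover have "lin_indep_on Z' (b + a) h"
    unfolding lin_indep_on_def
  proof (rule allI, rule impI)
    fix c assume c: "\<forall>y\<in>Z'. (\<Sum>i<b + a. c i * h i y) = 0"
    define G where "G y = (\<Sum>i<a. c (b + i) * g i y)" for y
    have split: "(\<Sum>i<b + a. c i * h i y) = (\<Sum>i<b. c i * p i y) + f y * G y" for y
    proof -
      have "(\<Sum>i<b + a. c i * h i y) = (\<Sum>i<b. c i * h i y) + (\<Sum>i<a. c (b + i) * h (b + i) y)"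
        by (induction a) (simp_all add: add.assoc)
      then show ?thesis by (simp add: h_def G_def sum_distrib_left mult_ac)
    qed
    have "\<forall>y\<in>Z. (\<Sum>i<b. c i * p i y) = 0"
      using c split f(2) \<open>Z \<subseteq> Z'\<close> by fastforce
    then have cb: "\<forall>i<b. c i = 0" using p(2) unfolding lin_indep_on_def by blast
    then have "\<forall>y\<in>Z'. f y * G y = 0" using c split by simp
    moreover have "poly_maxdeg I k G"
      unfolding G_def using g(1) by (intro poly_maxdeg_sum poly_maxdeg_scale) auto
    ultimately have "\<forall>y\<in>Z'. G y = 0"
      using zirreducible_mult_eq_0[OF I Z' f(1)] f(3) by blast
    then have "\<forall>i<a. c (b + i) = 0"
      using spec[OF g(2)[unfolded lin_indep_on_def], of "\<lambda>i. c (b + i)"] by (simp add: G_def)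
    with cb show "\<forall>i<b + a. c i = 0"
      by (metis add_diff_inverse_nat nat_add_left_cancel_less)
  qed
  ultimately show ?thesis unfolding has_indep_polys_def by blast
qed

lemma has_indep_polys_chain:
  assumes I: "finite I" and irr: "\<forall>j\<le>n. zirreducible I (Z j)" and sub: "\<forall>j<n. Z j \<subseteq> Z (Suc j)"
    and f: "\<forall>j<n. poly_maxdeg I E (f j) \<and> (\<forall>y\<in>Z j. f j y = 0) \<and> (\<exists>y\<in>Z (Suc j). f j y \<noteq> 0)"
    and "j \<le> n"
  shows "has_indep_polys I (Z j) (t * E) ((t + j) choose j)"
  using \<open>j \<le> n\<close>
proof (induction j arbitrary: t)
  case 0
  then show ?case using has_indep_polys_1[OF I] irr unfolding zirreducible_def by simp
next
  case (Suc j)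
  note IH_j = Suc.IH
  have j: "j < n" "Suc j \<le> n" using Suc.prems by simp_all
  show ?case
  proof (induction t)
    case 0
    then show ?case
      using has_indep_polys_1[OF I] irr j(2) unfolding zirreducible_def by simp
  next
    case (Suc t)
    have "has_indep_polys I (Z j) (E + t * E) ((Suc t + j) choose j)"
      using IH_j[of "Suc t"] j by simp
    moreover have "zirreducible I (Z (Suc j))" "Z j \<subseteq> Z (Suc j)"
      using irr sub j by auto
    moreover have "poly_maxdeg I E (f j)" "\<forall>y\<in>Z j. f j y = 0" "\<exists>y\<in>Z (Suc j). f j y \<noteq> 0"
      using f j by auto
    ultimately have "has_indep_polys I (Z (Suc j)) (E + t * E)
        (((Suc t + j) choose j) + ((t + Suc j) choose Suc j))"
      using has_indep_polys_extend[OF I _ _ _ _ _ Suc.IH] by blast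
    moreover have "((Suc t + j) choose j) + ((t + Suc j) choose Suc j) = (Suc t + Suc j) choose Suc j"
      by simp
    ultimately show ?case by (simp add: add.commute)
  qed
qed

lemma chain_separating_polys:
  assumes I: "finite I" and cl: "\<forall>j\<le>n. zclosed I (Z j)" and ch: "\<forall>j<n. Z j \<subset> Z (Suc j)"
  obtains E f where
    "\<forall>j<n. poly_maxdeg I E (f j) \<and> (\<forall>y\<in>Z j. f j y = 0) \<and> (\<exists>y\<in>Z (Suc j). f j y \<noteq> 0)"
proof -
  have "\<exists>e p. poly_maxdeg I e p \<and> (\<forall>y\<in>Z j. p y = 0) \<and> (\<exists>y\<in>Z (Suc j). p y \<noteq> 0)"
    if "j < n" for j
  proof -
    obtain y where "y \<in> Z (Suc j)" "y \<notin> Z j" using ch \<open>j < n\<close> by blast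
    moreover have "\<forall>i. i \<notin> I \<longrightarrow> y i = 0"
      using zclosed_imp_zero cl \<open>j < n\<close> \<open>y \<in> Z (Suc j)\<close> by (metis Suc_leI)
    ultimately show ?thesis
      using zclosed_separating_poly[OF I] cl \<open>j < n\<close> by (metis less_imp_le_nat)
  qed
  then obtain e f where ef:
    "\<forall>j<n. poly_maxdeg I (e j) (f j) \<and> (\<forall>y\<in>Z j. f j y = 0) \<and> (\<exists>y\<in>Z (Suc j). f j y \<noteq> 0)"
    by metis
  have "poly_maxdeg I (\<Sum>j<n. e j) (f j)" if "j < n" for j
    using ef that poly_maxdeg_mono[OF I member_le_sum[of j "{..<n}" e]] by auto
  then show ?thesis using that ef by blast
qed

lemma power_le_fact_mult_binomial: "(t + 1) ^ m \<le> fact m * ((t + m) choose m)"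
proof -
  have "fact t * (t + 1) ^ m \<le> (fact (t + m) :: nat)"
  proof (induction m)
    case (Suc m)
    have "fact t * (t + 1) ^ Suc m = (t + 1) * (fact t * (t + 1) ^ m)" by (simp add: mult_ac)
    also have "\<dots> \<le> (t + Suc m) * fact (t + m)" using Suc by (intro mult_mono) auto
    finally show ?case by simp
  qed simp
  also have "\<dots> = fact t * (fact m * ((t + m) choose m))"
    using binomial_fact_lemma[of m "t + m"] by (simp add: mult_ac)
  finally show ?thesis by simp
qed

lemma exists_power_lt_binomial: "\<exists>t. (t * E + 1) ^ N < (t + Suc N) choose Suc N"
proof (rule ccontr)
  assume "\<not> ?thesis"
  then have le: "(t + Suc N) choose Suc N \<le> (t * E + 1) ^ N" for t
    by (simp add: not_less)
  define t where "t = fact (Suc N) * (E + 1) ^ N"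
  have "(t + 1) ^ Suc N \<le> fact (Suc N) * ((t + Suc N) choose Suc N)"
    by (rule power_le_fact_mult_binomial)
  also have "\<dots> \<le> fact (Suc N) * ((E + 1) * (t + 1)) ^ N"
    by (intro mult_left_mono order_trans[OF le] power_mono) (auto simp: algebra_simps)
  also have "\<dots> = t * (t + 1) ^ N"
    unfolding t_def by (simp only: power_mult_distrib mult.assoc)
  finally show False by simp
qed

lemma chain_length_le_card:
  assumes I: "finite I" and irr: "\<forall>j\<le>n. zirreducible I (Z j)" and ch: "\<forall>j<n. Z j \<subset> Z (Suc j)"
  shows "n \<le> card I"
proof (rule ccontr)
  assume "\<not> n \<le> card I"
  then have N: "Suc (card I) \<le> n" by simp
  obtain E f where f:
    "\<forall>j<n. poly_maxdeg I E (f j) \<and> (\<forall>y\<in>Z j. f j y = 0) \<and> (\<exists>y\<in>Z (Suc j). f j y \<noteq> 0)"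
    using chain_separating_polys[OF I] irr ch unfolding zirreducible_def by metis
  obtain t where t: "(t * E + 1) ^ card I < (t + Suc (card I)) choose Suc (card I)"
    using exists_power_lt_binomial by blast
  have "has_indep_polys I (Z (Suc (card I))) (t * E) ((t + Suc (card I)) choose Suc (card I))"
    using has_indep_polys_chain[OF I irr _ f N] ch by auto
  then have "(t + Suc (card I)) choose Suc (card I) \<le> (t * E + 1) ^ card I"
    using has_indep_polys_le_card[OF I] card_exps_le[OF I] order_trans by blast
  with t show False by simp
qed

definition chain_lengths :: "'i set \<Rightarrow> ('i \<Rightarrow> real) set \<Rightarrow> nat set" where
  "chain_lengths I V =
     {n. \<exists>Z. (\<forall>k\<le>n. zirreducible I (Z k) \<and> Z k \<subseteq> V) \<and> (\<forall>k<n. Z k \<subset> Z (Suc k))}"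

lemma zdim_le_card:
  assumes I: "finite I" shows "zdim I V \<le> card I"
proof -
  have "n \<le> card I" if "n \<in> chain_lengths I V" for n
    using that chain_length_le_card[OF I] unfolding chain_lengths_def by blast
  then show ?thesis
    unfolding zdim_def chain_lengths_def[symmetric]
    by (cases "chain_lengths I V = {}") (auto intro: cSup_least)
qed

lemma le_zdim:
  assumes I: "finite I" and "n \<in> chain_lengths I V" shows "n \<le> zdim I V"
proof -
  have "bdd_above (chain_lengths I V)"
    using chain_length_le_card[OF I] unfolding chain_lengths_def by (intro bdd_aboveI) blast
  with assms(2) show ?thesis
    unfolding zdim_def chain_lengths_def[symmetric] by (rule cSup_upper)
qed

section \<open>Chains of coordinate subspaces\<close>

definition coord_space :: "'i set \<Rightarrow> ('i \<Rightarrow> real) set" where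
  "coord_space S = {y. \<forall>i. i \<notin> S \<longrightarrow> y i = 0}"

lemma poly_on_coordinate:
  assumes I: "finite I" and "i \<in> I" shows "poly_on I (\<lambda>y. y i)"
proof -
  define m where "m j = (if j = i then 1 else 0 :: nat)" for j
  have "m \<in> exps_le I 1" using \<open>i \<in> I\<close> by (auto simp: exps_le_def m_def)
  then have "poly_on I (monomial_on I m)"
    by (intro poly_maxdeg_imp_poly_on[OF I] poly_maxdeg_monomial_on[OF I])
  moreover have "monomial_on I m = (\<lambda>y. y i)"
  proof
    fix y
    have "monomial_on I m y = (\<Prod>j\<in>I. if j = i then y j else 1)"
      unfolding monomial_on_def m_def by (rule prod.cong) auto
    then show "monomial_on I m y = y i" using assms by (simp add: prod.delta)
  qed
  ultimately show ?thesis by simp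
qed

lemma zclosed_coord_space:
  assumes I: "finite I" and "S \<subseteq> I" shows "zclosed I (coord_space S)"
  unfolding zclosed_def
proof (intro exI conjI)
  show "\<forall>p\<in>(\<lambda>i y. y i) ` (I - S). poly_on I p"
    using poly_on_coordinate[OF I] by auto
  show "coord_space S = {y. (\<forall>i. i \<notin> I \<longrightarrow> y i = 0) \<and> (\<forall>p\<in>(\<lambda>i y. y i) ` (I - S). p y = 0)}"
    using \<open>S \<subseteq> I\<close> unfolding coord_space_def by auto
qed

lemma zirreducible_if_line_closed:
  assumes I: "finite I" and Z: "zclosed I Z" "Z \<noteq> {}"
    and line: "\<And>y z t. y \<in> Z \<Longrightarrow> z \<in> Z \<Longrightarrow> (\<lambda>i. y i + t * (z i - y i)) \<in> Z"
  shows "zirreducible I Z"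
  unfolding zirreducible_def
proof (intro conjI Z allI impI)
  fix A B assume A: "zclosed I A" and B: "zclosed I B" and "Z \<subseteq> A \<union> B"
  show "Z \<subseteq> A \<or> Z \<subseteq> B"
  proof (rule ccontr)
    assume "\<not> (Z \<subseteq> A \<or> Z \<subseteq> B)"
    then obtain y z where y: "y \<in> Z" "y \<notin> A" and z: "z \<in> Z" "z \<notin> B" by blast
    obtain k p where p: "poly_maxdeg I k p" "\<forall>x\<in>A. p x = 0" "p y \<noteq> 0"
      using zclosed_separating_poly[OF I A y(2)] zclosed_imp_zero[OF Z(1) y(1)] by blast
    obtain l q where q: "poly_maxdeg I l q" "\<forall>x\<in>B. q x = 0" "q z \<noteq> 0"
      using zclosed_separating_poly[OF I B z(2)] zclosed_imp_zero[OF Z(1) z(1)] by blast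
    \<comment> \<open>On the line through y and z, p * q is a univariate polynomial vanishing everywhere.\<close>
    obtain P Q where P: "\<forall>t. p (\<lambda>i. y i + t * (z i - y i)) = poly P t"
      and Q: "\<forall>t. q (\<lambda>i. y i + t * (z i - y i)) = poly Q t"
      using poly_maxdeg_on_line[OF p(1)] poly_maxdeg_on_line[OF q(1)] by blast
    have "poly (P * Q) t = 0" for t
    proof -
      have "(\<lambda>i. y i + t * (z i - y i)) \<in> A \<union> B"
        using line[OF y(1) z(1)] \<open>Z \<subseteq> A \<union> B\<close> by blast
      then show ?thesis using p(2) q(2) P Q by (auto simp flip: P Q)
    qed
    then have "P * Q = 0" using poly_all_0_iff_0 by blast
    then have "P = 0 \<or> Q = 0" by simp
    moreover have "poly P 0 \<noteq> 0" using P[rule_format, of 0] p(3) by simp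
    moreover have "(\<lambda>i. y i + 1 * (z i - y i)) = z" by simp
    then have "poly Q 1 \<noteq> 0" using Q[rule_format, of 1] q(3) by simp
    ultimately show False by auto
  qed
qed

lemma zirreducible_coord_space: "finite I \<Longrightarrow> S \<subseteq> I \<Longrightarrow> zirreducible I (coord_space S)"
  by (rule zirreducible_if_line_closed[OF _ zclosed_coord_space]) (auto simp: coord_space_def)

lemma card_in_chain_lengths:
  assumes I: "finite I" and V: "coord_space I \<subseteq> V" shows "card I \<in> chain_lengths I V"
proof -
  obtain xs where xs: "set xs = I" "distinct xs" using finite_distinct_list[OF I] by blast
  define Z where "Z k = coord_space (set (take k xs))" for k
  have sub: "set (take k xs) \<subseteq> I" for k using xs(1) set_take_subset[of k xs] by simp
  have "Z k \<subset> Z (Suc k)" if "k < card I" for k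
  proof
    have k: "k < length xs" using that distinct_card[OF xs(2)] xs(1) by simp
    show "Z k \<subseteq> Z (Suc k)"
      unfolding Z_def coord_space_def using set_take_subset_set_take[of k "Suc k" xs] by auto
    have "xs ! k \<in> set (drop k xs)"
      using Cons_nth_drop_Suc[OF k] by (metis list.set_intros(1))
    then have "xs ! k \<notin> set (take k xs)"
      using set_take_disj_set_drop_if_distinct[OF xs(2), of k k] by blast
    moreover have "xs ! k \<in> set (take (Suc k) xs)" using k by (simp add: take_Suc_conv_app_nth)
    ultimately have "(\<lambda>i. if i = xs ! k then 1 else 0) \<in> Z (Suc k) - Z k"
      unfolding Z_def coord_space_def by auto
    then show "Z k \<noteq> Z (Suc k)" by blast
  qed
  moreover have "zirreducible I (Z k) \<and> Z k \<subseteq> V" for k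
    using zirreducible_coord_space[OF I sub] sub V unfolding Z_def coord_space_def by blast
  ultimately show ?thesis unfolding chain_lengths_def by blast
qed

section \<open>Coefficients of homogeneous forms\<close>

lemma finite_monoms: "finite (monoms n k)"
proof (rule finite_subset[OF _ finite_exps_le[of "{..<n}" k]])
  show "monoms n k \<subseteq> exps_le {..<n} k"
  proof
    fix \<alpha> assume \<alpha>: "\<alpha> \<in> monoms n k"
    have "\<alpha> i \<le> k" if "i < n" for i
      using \<alpha> member_le_sum[of i "{..<n}" \<alpha>] that unfolding monoms_def by simp
    then show "\<alpha> \<in> exps_le {..<n} k" using \<alpha> unfolding monoms_def exps_le_def by auto
  qed
qed simp

lemma finite_cindex: "finite (cindex n k D)"
  unfolding cindex_def using finite_monoms by simp

lemma card_cindex: "card (cindex n k D) = D * card (monoms n k)"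
  unfolding cindex_def by (simp add: card_cartesian_product)

lemma digits_eq_if_base_expansion_eq:
  fixes B :: nat
  assumes "\<forall>i<n. a i < B" "\<forall>i<n. b i < B" "(\<Sum>i<n. a i * B ^ i) = (\<Sum>i<n. b i * B ^ i)"
  shows "\<forall>i<n. a i = b i"
  using assms
proof (induction n arbitrary: a b)
  case (Suc n)
  have split: "(\<Sum>i<Suc n. c i * B ^ i) = c 0 + B * (\<Sum>i<n. c (Suc i) * B ^ i)" for c
    by (subst sum.lessThan_Suc_shift) (simp add: sum_distrib_left mult_ac)
  define Sa Sb where "Sa = (\<Sum>i<n. a (Suc i) * B ^ i)" and "Sb = (\<Sum>i<n. b (Suc i) * B ^ i)"
  have eq: "a 0 + B * Sa = b 0 + B * Sb" using Suc.prems(3) unfolding split Sa_def Sb_def .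
  have "a 0 < B" "b 0 < B" using Suc.prems by auto
  then have "a 0 = (a 0 + B * Sa) mod B" "b 0 = (b 0 + B * Sb) mod B"
    and "Sa = (a 0 + B * Sa) div B" "Sb = (b 0 + B * Sb) div B" by simp_all
  then have "a 0 = b 0" "Sa = Sb" unfolding eq by linarith+
  moreover have "\<forall>i<n. a (Suc i) = b (Suc i)"
    using Suc.IH[of "\<lambda>i. a (Suc i)" "\<lambda>i. b (Suc i)"] Suc.prems(1,2) \<open>Sa = Sb\<close>
    unfolding Sa_def Sb_def by simp
  ultimately show ?case by (metis less_Suc_eq_0_disj)
qed simp

lemma monomials_linearly_independent:
  assumes zero: "\<forall>x :: vec. (\<Sum>\<alpha>\<in>monoms n k. c \<alpha> * (\<Prod>i<n. x i ^ \<alpha> i)) = 0"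
    and "\<alpha>0 \<in> monoms n k"
  shows "c \<alpha>0 = 0"
proof -
  \<comment> \<open>Kronecker substitution x i = s ^ B ^ i sends distinct monomials to distinct powers of s.\<close>
  define B where "B = k + 1"
  define \<phi> where "\<phi> \<alpha> = (\<Sum>i<n. \<alpha> i * B ^ i)" for \<alpha> :: "nat \<Rightarrow> nat"
  have digits: "\<forall>i<n. \<alpha> i < B" if "\<alpha> \<in> monoms n k" for \<alpha>
    using that member_le_sum[of _ "{..<n}" \<alpha>] unfolding monoms_def B_def by (simp add: less_Suc_eq_le)
  have inj: "inj_on \<phi> (monoms n k)"
  proof (rule inj_onI, rule ext)
    fix \<alpha> \<beta> i assume "\<alpha> \<in> monoms n k" "\<beta> \<in> monoms n k" "\<phi> \<alpha> = \<phi> \<beta>"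
    then show "\<alpha> i = \<beta> i"
      using digits_eq_if_base_expansion_eq[OF digits digits] unfolding \<phi>_def monoms_def
      by (cases "i < n") auto
  qed
  define P where "P = (\<Sum>\<alpha>\<in>monoms n k. monom (c \<alpha>) (\<phi> \<alpha>))"
  have "poly P s = (\<Sum>\<alpha>\<in>monoms n k. c \<alpha> * (\<Prod>i<n. (s ^ B ^ i) ^ \<alpha> i))" for s
    unfolding P_def \<phi>_def
    by (simp add: poly_sum poly_monom power_sum power_mult[symmetric] mult.commute)
  then have "P = 0" using zero poly_all_0_iff_0 by auto
  moreover have "Polynomial.coeff P (\<phi> \<alpha>0) = (\<Sum>\<alpha>\<in>monoms n k. if \<alpha> = \<alpha>0 then c \<alpha> else 0)"
    unfolding P_def coeff_sum coeff_monom
    using inj_onD[OF inj] \<open>\<alpha>0 \<in> monoms n k\<close> by (intro sum.cong) auto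
  ultimately show ?thesis using \<open>\<alpha>0 \<in> monoms n k\<close> finite_monoms by (simp add: sum.delta')
qed

lemma coeff_hom_form:
  assumes "\<forall>\<alpha>. \<alpha> \<notin> monoms n k \<longrightarrow> c \<alpha> = 0"
  shows "Defs.coeff n k (\<lambda>x. \<Sum>\<alpha>\<in>monoms n k. c \<alpha> * (\<Prod>i<n. x i ^ \<alpha> i)) = c"
  unfolding Defs.coeff_def
proof (rule the_equality)
  fix c' assume c': "(\<forall>\<alpha>. \<alpha> \<notin> monoms n k \<longrightarrow> c' \<alpha> = 0) \<and>
    (\<forall>x. (\<Sum>\<alpha>\<in>monoms n k. c \<alpha> * (\<Prod>i<n. x i ^ \<alpha> i)) = (\<Sum>\<alpha>\<in>monoms n k. c' \<alpha> * (\<Prod>i<n. x i ^ \<alpha> i)))"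
  then have "\<forall>x. (\<Sum>\<alpha>\<in>monoms n k. (c' \<alpha> - c \<alpha>) * (\<Prod>i<n. x i ^ \<alpha> i)) = 0"
    by (simp add: left_diff_distrib sum_subtractf)
  then have "c' \<alpha> - c \<alpha> = 0" if "\<alpha> \<in> monoms n k" for \<alpha>
    using monomials_linearly_independent[where c = "\<lambda>\<alpha>. c' \<alpha> - c \<alpha>"] that by blast
  then show "c' = c" using c' assms by fastforce
qed (use assms in simp)

lemma coord_space_subset_sym_tuples: "coord_space (cindex n k D) \<subseteq> sym_tuples n k D"
proof
  fix y assume y: "y \<in> coord_space (cindex n k D)"
  define c where "c j \<alpha> = (if \<alpha> \<in> monoms n k then y (j, \<alpha>) else 0)" for j \<alpha>
  define F where "F x j = (\<Sum>\<alpha>\<in>monoms n k. c j \<alpha> * (\<Prod>i<n. x i ^ \<alpha> i))" for x j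
  have "\<forall>j<D. hom_form n k (\<lambda>x. F x j)"
    unfolding hom_form_def F_def by blast
  moreover have "coords n k D F = y"
  proof
    fix p :: cidx
    obtain j \<alpha> where p: "p = (j, \<alpha>)" by fastforce
    have "Defs.coeff n k (\<lambda>x. F x j) = c j"
      unfolding F_def by (rule coeff_hom_form) (simp add: c_def)
    then show "coords n k D F p = y p"
      using y unfolding p coords_def c_def coord_space_def cindex_def by auto
  qed
  ultimately show "y \<in> sym_tuples n k D" unfolding sym_tuples_def by blast
qed

lemma card_monoms_less:
  assumes "2 \<le> n" and "k' < k" shows "card (monoms n k') < card (monoms n k)"
proof -
  \<comment> \<open>Raising the exponent of x 0 by k - k' embeds the degree-k' monomials, missing x 1 ^ k.\<close>
  define g where "g \<alpha> i = \<alpha> i + (if i = 0 then k - k' else 0)" for \<alpha> :: "nat \<Rightarrow> nat" and i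
  define \<beta> where "\<beta> i = (if i = 1 then k else 0)" for i :: nat
  have "inj g" unfolding g_def by (rule injI) (simp add: fun_eq_iff)
  moreover have "g ` monoms n k' \<subseteq> monoms n k - {\<beta>}"
  proof
    fix x assume "x \<in> g ` monoms n k'"
    then obtain \<alpha> where \<alpha>: "\<alpha> \<in> monoms n k'" "x = g \<alpha>" by blast
    have "(\<Sum>i<n. g \<alpha> i) = (\<Sum>i<n. \<alpha> i) + (k - k')"
      unfolding g_def using assms(1) by (simp add: sum.distrib)
    then show "x \<in> monoms n k - {\<beta>}"
      using \<alpha> assms unfolding monoms_def g_def \<beta>_def by (auto simp: fun_eq_iff)
  qed
  moreover have "\<beta> \<in> monoms n k" using assms(1) unfolding monoms_def \<beta>_def by simp
  ultimately have "card (monoms n k') \<le> card (monoms n k - {\<beta>})"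
    using finite_monoms by (metis card_image card_mono finite_Diff inj_on_subset subset_UNIV)
  also have "\<dots> < card (monoms n k)"
    using finite_monoms \<open>\<beta> \<in> monoms n k\<close> by (rule card_Diff1_less)
  finally show ?thesis .
qed

lemma depth_ratio_bound:
  assumes "2 \<le> r" and "(2 * r) ^ a \<le> r ^ b"
  shows "(1 + ln 2 / ln (real r)) * real a \<le> real b"
proof -
  have r: "2 \<le> real r" "0 < ln (real r)" using assms(1) by simp_all
  have "real ((2 * r) ^ a) \<le> real (r ^ b)"
    using assms(2) by (simp only: of_nat_le_iff)
  then have "(2 * real r) ^ a \<le> real r ^ b" by simp
  then have "ln ((2 * real r) ^ a) \<le> ln (real r ^ b)"
    using r by (subst ln_le_cancel_iff) auto
  then have "real a * (ln 2 + ln (real r)) \<le> real b * ln (real r)"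
    using r by (simp add: ln_realpow ln_mult distrib_left)
  then show ?thesis
    using r by (simp add: field_simps)
qed

theorem theorem1:
  fixes r :: nat and dq dn :: "nat list"
  assumes "r \<ge> 2"
    and "arch dq" and "arch dn"
    and "depth dq > 1" and "depth dn > 1"
    and "dq ! 0 = dn ! 0" and "last dq = last dn"
    and "dq ! 0 \<ge> 2"
    and "qres_filling dq r"
    and "zdim (plain_index dn r) (plain_variety dn r) \<ge> zdim (qres_index dq r) (qres_variety dq r)"
  shows "real (depth dn) \<ge> 1 + (1 + ln 2 / ln (real r)) * (real (depth dq) - 1)"
proof -
  define n D kq kn where "n = dq ! 0" and "D = last dq"
    and "kq = (2 * r) ^ (depth dq - 1)" and "kn = r ^ (depth dn - 1)"
  have "D \<ge> 1" using assms(2) last_in_set[of dq] unfolding arch_def D_def by fastforce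
  have "qres_variety dq r = sym_tuples n kq D"
    using assms(9) unfolding qres_filling_def n_def kq_def D_def .
  then have "card (cindex n kq D) \<le> zdim (qres_index dq r) (qres_variety dq r)"
    using le_zdim[OF finite_cindex card_in_chain_lengths[OF finite_cindex coord_space_subset_sym_tuples]]
    unfolding qres_index_def n_def kq_def D_def by simp
  also have "\<dots> \<le> zdim (plain_index dn r) (plain_variety dn r)" by (rule assms(10))
  also have "\<dots> \<le> card (cindex n kn D)"
    using zdim_le_card[OF finite_cindex] assms(6,7) unfolding plain_index_def n_def kn_def D_def by simp
  finally have "card (monoms n kq) \<le> card (monoms n kn)"
    using \<open>D \<ge> 1\<close> by (simp add: card_cindex)
  then have "(2 * r) ^ (depth dq - 1) \<le> r ^ (depth dn - 1)"
    using card_monoms_less[of n kn kq] assms(8) unfolding n_def kq_def kn_def by linarith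
  then have "(1 + ln 2 / ln (real r)) * real (depth dq - 1) \<le> real (depth dn - 1)"
    by (rule depth_ratio_bound[OF assms(1)])
  then show ?thesis using assms(4,5) by (simp add: of_nat_diff)
qed

end
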